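(* Let $\Gamma$ be a finite graph with vertices $v_1,\dots,v_n$ ($n\ge2$) and edges $e_1,\dots,e_m$ with edge dimensions $\vec e=(e_1,\dots,e_m)$, and let $V_1,\dots,V_n$ be complex vector spaces, $\dim V_j=\mathbf v_j$. Suppose $v_1$ has valence one and is joined by the edge $e_1$ to $v_2$, and suppose $\mathbf v_1\le e_1$. Let $\tilde\Gamma$ be the graph obtained from $\Gamma$ by deleting $v_1$ and $e_1$, with the remaining edges keeping their dimensions $\vec{\tilde e}=(e_2,\dots,e_m)$, and attach $\tilde V_1:=V_1\otimes V_2$ to the vertex $v_2$ and $V_j$ to $v_j$ for $j\ge3$. Then, under the natural identification $V_1\otimes\cdots\otimes V_n=\tilde V_1\otimes V_3\otimes\cdots\otimes V_n$, $$TNS(\Gamma,\vec e,V_1\otimes\cdots\otimes V_n)=TNS(\tilde\Gamma,\vec{\tilde e},\tilde V_1\otimes V_3\otimes\cdots\otimes V_n).$$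
   Context: Tensor network states: for a finite graph with vector spaces $W_j$ attached to vertices and complex vector spaces $E_s$ of dimension $e_s$ attached to edges (edges oriented arbitrarily), $TNS(\Gamma,\vec e,W_1\otimes\cdots\otimes W_k)$ is the set of tensors $T\in W_1\otimes\cdots\otimes W_k$ such that there are $T_j\in W_j\otimes(\bigotimes_{s\text{ entering }v_j}E_s)\otimes(\bigotimes_{t\text{ leaving }v_j}E_t^* )$ with $T=\mathrm{Con}(T_1\otimes\cdots\otimes T_k)$, where $\mathrm{Con}$ contracts every $E_s$ with $E_s^*$. *)

theory Defs
  imports Complex_Main "HOL-Library.FuncSet" "HOL-Library.Nat_Bijection"
begin

(* Vertices: a finite set V of nats; edges: a finite set E of nats,
   edge s oriented from src s to tgt s (s enters tgt s, leaves src s).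
   Vertex v carries W_v = C^(P v) (basis P v, dim = card (P v)); edge s carries
   E_s = C^{..<e s}.  A tensor in the tensor product of the W_v is an (extensional)
   function on multi-indices in PiE V P. *)

(* A local tensor at v: f i a b, with i the physical index, a giving the indices of
   the E_s factors (s entering v) and b those of the E_t^* factors (t leaving v);
   it may only depend on the entries of a at entering edges and of b at leaving edges. *)
definition local_ok ::
  "nat set \<Rightarrow> (nat \<Rightarrow> nat) \<Rightarrow> (nat \<Rightarrow> nat) \<Rightarrow> nat
   \<Rightarrow> (nat \<Rightarrow> (nat \<Rightarrow> nat) \<Rightarrow> (nat \<Rightarrow> nat) \<Rightarrow> complex) \<Rightarrow> bool" where
  "local_ok E src tgt v f \<longleftrightarrow>
     (\<forall>i a a' b b'. (\<forall>s\<in>E. tgt s = v \<longrightarrow> a s = a' s) \<longrightarrow>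
                    (\<forall>s\<in>E. src s = v \<longrightarrow> b s = b' s) \<longrightarrow> f i a b = f i a' b')"

(* TNS(Gamma, e, W_1 (x) ... (x) W_k): contraction pairs each E_s with E_s^*, i.e. the
   index of E_s at tgt s equals the index of E_s^* at src s, summed over {..<e s}. *)
definition TNS ::
  "nat set \<Rightarrow> nat set \<Rightarrow> (nat \<Rightarrow> nat) \<Rightarrow> (nat \<Rightarrow> nat) \<Rightarrow> (nat \<Rightarrow> nat)
   \<Rightarrow> (nat \<Rightarrow> nat set) \<Rightarrow> ((nat \<Rightarrow> nat) \<Rightarrow> complex) set" where
  "TNS V E src tgt e P =
    {T. (\<forall>\<iota>. \<iota> \<notin> PiE V P \<longrightarrow> T \<iota> = 0) \<and>
        (\<exists>Tl. (\<forall>v\<in>V. local_ok E src tgt v (Tl v)) \<and>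
              (\<forall>\<iota>\<in>PiE V P. T \<iota> =
                 (\<Sum>\<alpha>\<in>PiE E (\<lambda>s. {..<e s}). \<Prod>v\<in>V. Tl v (\<iota> v) \<alpha> \<alpha>)))}"

(* Natural identification: a tensor T' on the merged graph (vertex 2 carrying
   V_1 (x) V_2 with basis prod_encode ` (P 1 \<times> P 2)) viewed as a tensor on the
   original vertices {1..n}. *)
definition merge12 :: "nat \<Rightarrow> (nat \<Rightarrow> nat set) \<Rightarrow> ((nat \<Rightarrow> nat) \<Rightarrow> complex) \<Rightarrow> (nat \<Rightarrow> nat) \<Rightarrow> complex" where
  "merge12 n P T' \<iota> =
     (if \<iota> \<in> PiE {1..n} P
      then T' (restrict (\<iota>(2 := prod_encode (\<iota> 1, \<iota> 2))) {2..n}) else 0)"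

end

theory Submission
  imports Defs
begin

text \<open>
Contracting the edge \<open>e\<^sub>1\<close> merges the two tensors at \<open>v\<^sub>1\<close> and \<open>v\<^sub>2\<close> into a single
tensor at \<open>v\<^sub>2\<close> with physical space \<open>V\<^sub>1 \<otimes> V\<^sub>2\<close>, so every tensor network state of
\<open>\<Gamma>\<close> is one of \<open>\<tilde>\<Gamma>\<close>. Conversely, since \<open>dim V\<^sub>1 \<le> e\<^sub>1\<close> we may embed \<open>V\<^sub>1\<close> into \<open>E\<^sub>1\<close>:
put the embedding at \<open>v\<^sub>1\<close> and let \<open>v\<^sub>2\<close> read the \<open>V\<^sub>1\<close>-index back off the
edge \<open>e\<^sub>1\<close>; contracting \<open>e\<^sub>1\<close> then reproduces the given tensor at \<open>v\<^sub>2\<close>.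
\<close>

type_synonym local_tensor = "nat \<Rightarrow> (nat \<Rightarrow> nat) \<Rightarrow> (nat \<Rightarrow> nat) \<Rightarrow> complex"

definition tn_state ::
  "nat set \<Rightarrow> nat set \<Rightarrow> (nat \<Rightarrow> nat) \<Rightarrow> (nat \<Rightarrow> nat set) \<Rightarrow> (nat \<Rightarrow> local_tensor)
    \<Rightarrow> (nat \<Rightarrow> nat) \<Rightarrow> complex" where
  "tn_state V E e P Tl \<iota> =
     (if \<iota> \<in> PiE V P then \<Sum>\<alpha>\<in>PiE E (\<lambda>s. {..<e s}). \<Prod>v\<in>V. Tl v (\<iota> v) \<alpha> \<alpha> else 0)"

lemma TNS_eq_tn_state:
  "TNS V E src tgt e P = {tn_state V E e P Tl | Tl. \<forall>v\<in>V. local_ok E src tgt v (Tl v)}"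
proof (intro set_eqI iffI)
  fix T assume "T \<in> TNS V E src tgt e P"
  then obtain Tl where loc: "\<forall>v\<in>V. local_ok E src tgt v (Tl v)"
    and zero: "\<forall>\<iota>. \<iota> \<notin> PiE V P \<longrightarrow> T \<iota> = 0"
    and val: "\<forall>\<iota>\<in>PiE V P. T \<iota> = (\<Sum>\<alpha>\<in>PiE E (\<lambda>s. {..<e s}). \<Prod>v\<in>V. Tl v (\<iota> v) \<alpha> \<alpha>)"
    unfolding TNS_def by blast
  from zero val have "T = tn_state V E e P Tl"
    by (auto simp: tn_state_def fun_eq_iff)
  with loc show "T \<in> {tn_state V E e P Tl | Tl. \<forall>v\<in>V. local_ok E src tgt v (Tl v)}"
    by blast
next
  fix T assume "T \<in> {tn_state V E e P Tl | Tl. \<forall>v\<in>V. local_ok E src tgt v (Tl v)}"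
  then obtain Tl where loc: "\<forall>v\<in>V. local_ok E src tgt v (Tl v)" and T: "T = tn_state V E e P Tl"
    by blast
  show "T \<in> TNS V E src tgt e P"
    unfolding TNS_def T tn_state_def using loc by (intro CollectI conjI exI[of _ Tl]) simp_all
qed

lemma local_ok_subset:
  "local_ok E' src tgt v f \<Longrightarrow> E' \<subseteq> E \<Longrightarrow> local_ok E src tgt v f"
  unfolding local_ok_def by blast

lemma local_ok_drop_edges:
  assumes "local_ok E src tgt v f" and "\<forall>s\<in>E - E'. src s \<noteq> v \<and> tgt s \<noteq> v"
  shows "local_ok E' src tgt v f"
  unfolding local_ok_def
proof (intro allI impI)
  fix i :: nat and a a' b b' :: "nat \<Rightarrow> nat"
  assume "\<forall>s\<in>E'. tgt s = v \<longrightarrow> a s = a' s" and "\<forall>s\<in>E'. src s = v \<longrightarrow> b s = b' s"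
  with assms(2) have "\<forall>s\<in>E. tgt s = v \<longrightarrow> a s = a' s" and "\<forall>s\<in>E. src s = v \<longrightarrow> b s = b' s"
    by auto
  with assms(1) show "f i a b = f i a' b'"
    unfolding local_ok_def by blast
qed

lemma local_ok_fun_upd_other:
  assumes "local_ok E src tgt v f" and "k \<in> E \<Longrightarrow> src k \<noteq> v \<and> tgt k \<noteq> v"
  shows "f i (a(k := x)) (b(k := y)) = f i a b"
  using assms unfolding local_ok_def by (metis fun_upd_other)

definition edge_leg :: "(nat \<Rightarrow> nat) \<Rightarrow> nat \<Rightarrow> nat \<Rightarrow> (nat \<Rightarrow> nat) \<Rightarrow> (nat \<Rightarrow> nat) \<Rightarrow> nat" where
  "edge_leg tgt k v a b = (if tgt k = v then a k else b k)"

lemma edge_leg_fun_upd_diag [simp]: "edge_leg tgt k v (a(k := x)) (a(k := x)) = x"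
  by (simp add: edge_leg_def)

lemma local_ok_edge_leg:
  assumes "k \<in> E" and "v \<in> {src k, tgt k}" and "\<And>x. local_ok E src tgt v (\<lambda>i. H i x)"
  shows "local_ok E src tgt v (\<lambda>i a b. H i (edge_leg tgt k v a b) a b)"
  unfolding local_ok_def
proof (intro allI impI)
  fix i :: nat and a a' b b' :: "nat \<Rightarrow> nat"
  assume a: "\<forall>s\<in>E. tgt s = v \<longrightarrow> a s = a' s" and b: "\<forall>s\<in>E. src s = v \<longrightarrow> b s = b' s"
  have "edge_leg tgt k v a b = edge_leg tgt k v a' b'"
    using assms(1,2) a b by (auto simp: edge_leg_def)
  moreover have "H i x a b = H i x a' b'" for x
    using assms(3)[of x] a b unfolding local_ok_def by blast
  ultimately show "H i (edge_leg tgt k v a b) a b = H i (edge_leg tgt k v a' b') a' b'"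
    by simp
qed

lemma local_ok_contract_leaf:
  fixes X :: "nat set"
  assumes "local_ok (insert k E) src tgt u f" and "local_ok (insert k E) src tgt w g"
    and "\<forall>s\<in>E. src s \<noteq> u \<and> tgt s \<noteq> u"
  shows "local_ok E src tgt w
           (\<lambda>i a b. \<Sum>x\<in>X. f (h i) (a(k := x)) (b(k := x)) * g (h' i) (a(k := x)) (b(k := x)))"
  unfolding local_ok_def
proof (intro allI impI sum.cong refl)
  fix i :: nat and a a' b b' :: "nat \<Rightarrow> nat" and x :: nat
  assume "\<forall>s\<in>E. tgt s = w \<longrightarrow> a s = a' s" and "\<forall>s\<in>E. src s = w \<longrightarrow> b s = b' s"
  then have "f (h i) (a(k := x)) (b(k := x)) = f (h i) (a'(k := x)) (b'(k := x))"
    and "g (h' i) (a(k := x)) (b(k := x)) = g (h' i) (a'(k := x)) (b'(k := x))"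
    using assms unfolding local_ok_def by (smt (verit) fun_upd_apply insert_iff)+
  then show "f (h i) (a(k := x)) (b(k := x)) * g (h' i) (a(k := x)) (b(k := x)) =
             f (h i) (a'(k := x)) (b'(k := x)) * g (h' i) (a'(k := x)) (b'(k := x))"
    by simp
qed

lemma sum_PiE_insert:
  assumes "k \<notin> S"
  shows "(\<Sum>\<alpha>\<in>PiE (insert k S) B. F \<alpha>) = (\<Sum>x\<in>B k. \<Sum>\<alpha>\<in>PiE S B. F (\<alpha>(k := x)))"
proof -
  have "(\<Sum>\<alpha>\<in>PiE (insert k S) B. F \<alpha>) = (\<Sum>p\<in>B k \<times> PiE S B. F ((\<lambda>(y, g). g(k := y)) p))"
    unfolding PiE_insert_eq by (rule sum.reindex[OF inj_combinator[OF assms], unfolded comp_def])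
  also have "\<dots> = (\<Sum>x\<in>B k. \<Sum>\<alpha>\<in>PiE S B. F (\<alpha>(k := x)))"
    by (simp add: sum.cartesian_product split_def)
  finally show ?thesis .
qed

lemma contract_edge:
  assumes "k \<notin> E" and "finite V" and "u \<notin> insert w V" and "w \<notin> V"
    and "\<forall>v\<in>V. local_ok (insert k E) src tgt v (Tl v) \<and> src k \<noteq> v \<and> tgt k \<noteq> v"
  shows "(\<Sum>\<alpha>\<in>PiE (insert k E) B. \<Prod>v\<in>insert u (insert w V). Tl v (\<iota> v) \<alpha> \<alpha>) =
         (\<Sum>\<alpha>\<in>PiE E B. (\<Sum>x\<in>B k. Tl u (\<iota> u) (\<alpha>(k := x)) (\<alpha>(k := x)) *
                                   Tl w (\<iota> w) (\<alpha>(k := x)) (\<alpha>(k := x)))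
                        * (\<Prod>v\<in>V. Tl v (\<iota> v) \<alpha> \<alpha>))"
proof -
  have rest: "(\<Prod>v\<in>V. Tl v (\<iota> v) (\<alpha>(k := x)) (\<alpha>(k := x))) = (\<Prod>v\<in>V. Tl v (\<iota> v) \<alpha> \<alpha>)"
    for \<alpha> x using assms(5) by (intro prod.cong refl) (metis local_ok_fun_upd_other)
  have "(\<Sum>\<alpha>\<in>PiE (insert k E) B. \<Prod>v\<in>insert u (insert w V). Tl v (\<iota> v) \<alpha> \<alpha>) =
        (\<Sum>x\<in>B k. \<Sum>\<alpha>\<in>PiE E B. Tl u (\<iota> u) (\<alpha>(k := x)) (\<alpha>(k := x)) *
                  Tl w (\<iota> w) (\<alpha>(k := x)) (\<alpha>(k := x)) * (\<Prod>v\<in>V. Tl v (\<iota> v) \<alpha> \<alpha>))"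
    using assms(1-4) by (simp add: sum_PiE_insert rest mult.assoc)
  also have "\<dots> = (\<Sum>\<alpha>\<in>PiE E B. (\<Sum>x\<in>B k. Tl u (\<iota> u) (\<alpha>(k := x)) (\<alpha>(k := x)) *
                  Tl w (\<iota> w) (\<alpha>(k := x)) (\<alpha>(k := x))) * (\<Prod>v\<in>V. Tl v (\<iota> v) \<alpha> \<alpha>))"
    by (subst sum.swap) (simp add: sum_distrib_right)
  finally show ?thesis .
qed

definition merge_index :: "nat \<Rightarrow> (nat \<Rightarrow> nat) \<Rightarrow> nat \<Rightarrow> nat" where
  "merge_index n \<iota> = restrict (\<iota>(2 := prod_encode (\<iota> 1, \<iota> 2))) {2..n}"

lemma merge12_eq: "\<iota> \<in> PiE {1..n} P \<Longrightarrow> merge12 n P T' \<iota> = T' (merge_index n \<iota>)"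
  by (simp add: merge12_def merge_index_def)

lemma merge_index_PiE:
  assumes "2 \<le> n" and "\<iota> \<in> PiE {1..n} P"
  shows "merge_index n \<iota> \<in> PiE {2..n} (P(2 := prod_encode ` (P 1 \<times> P 2)))"
  using assms by (auto simp: merge_index_def PiE_iff)

lemma prod_merge_index:
  assumes "2 \<le> n"
  shows "(\<Prod>v\<in>{2..n}. H v (merge_index n \<iota> v)) =
         H 2 (prod_encode (\<iota> 1, \<iota> 2)) * (\<Prod>v\<in>{3..n}. H v (\<iota> v))"
proof -
  have "{2..n} = insert 2 {3..n}" using assms by auto
  then show ?thesis by (simp add: merge_index_def)
qed

definition leaf_merge :: "(nat \<Rightarrow> nat) \<Rightarrow> (nat \<Rightarrow> local_tensor) \<Rightarrow> local_tensor" where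
  "leaf_merge e Tl = (\<lambda>k a b. \<Sum>x<e 1.
     Tl 1 (fst (prod_decode k)) (a(1 := x)) (b(1 := x)) * Tl 2 (snd (prod_decode k)) (a(1 := x)) (b(1 := x)))"

text \<open>Conversely, an injection \<open>f\<close> of the basis \<open>A\<close> of \<open>V\<^sub>1\<close> into that of \<open>E\<^sub>1\<close> splits a
tensor at \<open>v\<^sub>2\<close>: \<open>v\<^sub>1\<close> carries \<open>f\<close>, and \<open>v\<^sub>2\<close> decodes the \<open>V\<^sub>1\<close>-index from its \<open>e\<^sub>1\<close>-leg.\<close>

definition leaf_split ::
  "(nat \<Rightarrow> nat) \<Rightarrow> (nat \<Rightarrow> nat) \<Rightarrow> nat set \<Rightarrow> (nat \<Rightarrow> local_tensor) \<Rightarrow> nat \<Rightarrow> local_tensor" where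
  "leaf_split tgt f A Tl' v =
     (if v = 1 then (\<lambda>i a b. if edge_leg tgt 1 1 a b = f i then 1 else 0)
      else if v = 2 then (\<lambda>i a b. if edge_leg tgt 1 2 a b \<in> f ` A
        then Tl' 2 (prod_encode (the_inv_into A f (edge_leg tgt 1 2 a b), i)) a b else 0)
      else Tl' v)"

lemma leaf_split_contract:
  assumes "f ` A \<subseteq> {..<e 1}" and "inj_on f A" and "i \<in> A"
    and "local_ok E src tgt 2 (Tl' 2)" and "1 \<notin> E"
  shows "(\<Sum>x<e 1. leaf_split tgt f A Tl' 1 i (\<alpha>(1 := x)) (\<alpha>(1 := x)) *
                  leaf_split tgt f A Tl' 2 j (\<alpha>(1 := x)) (\<alpha>(1 := x))) =
         Tl' 2 (prod_encode (i, j)) \<alpha> \<alpha>"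
proof -
  have "(\<Sum>x<e 1. leaf_split tgt f A Tl' 1 i (\<alpha>(1 := x)) (\<alpha>(1 := x)) *
                  leaf_split tgt f A Tl' 2 j (\<alpha>(1 := x)) (\<alpha>(1 := x))) =
        (\<Sum>x<e 1. if x = f i then leaf_split tgt f A Tl' 2 j (\<alpha>(1 := x)) (\<alpha>(1 := x)) else 0)"
    by (intro sum.cong refl) (simp add: leaf_split_def)
  also have "\<dots> = leaf_split tgt f A Tl' 2 j (\<alpha>(1 := f i)) (\<alpha>(1 := f i))"
    using assms(1,3) by auto
  also have "\<dots> = Tl' 2 (prod_encode (i, j)) (\<alpha>(1 := f i)) (\<alpha>(1 := f i))"
    using assms(2,3) by (simp add: leaf_split_def the_inv_into_f_f)
  also have "\<dots> = Tl' 2 (prod_encode (i, j)) \<alpha> \<alpha>"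
    by (rule local_ok_fun_upd_other[OF assms(4)]) (use assms(5) in blast)
  finally show ?thesis .
qed

locale leaf_edge =
  fixes n m :: nat and src tgt :: "nat \<Rightarrow> nat"
  assumes two_le_n: "2 \<le> n" and one_le_m: "1 \<le> m"
    and leaf_edge_ends: "{src 1, tgt 1} = {1, 2}"
    and leaf_isolated: "\<forall>s\<in>{2..m}. src s \<noteq> 1 \<and> tgt s \<noteq> 1"
begin

lemma edges_eq: "{1..m} = insert 1 {2..m}"
  using one_le_m by auto

lemma vertices_eq: "{1..n} = insert 1 (insert 2 {3..n})"
  using two_le_n by auto

lemma leaf_edge_avoids: "v \<in> {3..n} \<Longrightarrow> src 1 \<noteq> v \<and> tgt 1 \<noteq> v"
  using leaf_edge_ends by (auto simp: doubleton_eq_iff)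

lemma local_ok_drop_leaf_edge:
  "v \<in> {3..n} \<Longrightarrow> local_ok {1..m} src tgt v f \<Longrightarrow> local_ok {2..m} src tgt v f"
  by (erule local_ok_drop_edges) (unfold edges_eq, use leaf_edge_avoids in auto)

lemma contract_leaf_edge:
  assumes loc: "\<forall>v\<in>{3..n}. local_ok {1..m} src tgt v (Tl v)"
    and merged: "\<And>\<alpha>. Tl' 2 (prod_encode (\<iota> 1, \<iota> 2)) \<alpha> \<alpha> =
        (\<Sum>x<e 1. Tl 1 (\<iota> 1) (\<alpha>(1 := x)) (\<alpha>(1 := x)) * Tl 2 (\<iota> 2) (\<alpha>(1 := x)) (\<alpha>(1 := x)))"
    and same: "\<forall>v\<in>{3..n}. Tl' v = Tl v"
  shows "(\<Sum>\<alpha>\<in>PiE {1..m} (\<lambda>s. {..<e s}). \<Prod>v\<in>{1..n}. Tl v (\<iota> v) \<alpha> \<alpha>) =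
         (\<Sum>\<alpha>\<in>PiE {2..m} (\<lambda>s. {..<e s}). \<Prod>v\<in>{2..n}. Tl' v (merge_index n \<iota> v) \<alpha> \<alpha>)"
proof -
  have "(\<Sum>\<alpha>\<in>PiE {1..m} (\<lambda>s. {..<e s}). \<Prod>v\<in>{1..n}. Tl v (\<iota> v) \<alpha> \<alpha>) =
        (\<Sum>\<alpha>\<in>PiE {2..m} (\<lambda>s. {..<e s}). (\<Sum>x<e 1. Tl 1 (\<iota> 1) (\<alpha>(1 := x)) (\<alpha>(1 := x)) *
           Tl 2 (\<iota> 2) (\<alpha>(1 := x)) (\<alpha>(1 := x))) * (\<Prod>v\<in>{3..n}. Tl v (\<iota> v) \<alpha> \<alpha>))"
    unfolding edges_eq vertices_eq
    by (rule contract_edge[where src = src and tgt = tgt and Tl = Tl])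
      (use loc[unfolded edges_eq] leaf_edge_avoids in auto)
  also have "\<dots> = (\<Sum>\<alpha>\<in>PiE {2..m} (\<lambda>s. {..<e s}). Tl' 2 (prod_encode (\<iota> 1, \<iota> 2)) \<alpha> \<alpha> *
                                           (\<Prod>v\<in>{3..n}. Tl v (\<iota> v) \<alpha> \<alpha>))"
    by (simp only: merged)
  also have "\<dots> = (\<Sum>\<alpha>\<in>PiE {2..m} (\<lambda>s. {..<e s}). \<Prod>v\<in>{2..n}. Tl' v (merge_index n \<iota> v) \<alpha> \<alpha>)"
  proof (rule sum.cong[OF refl])
    fix \<alpha>
    show "Tl' 2 (prod_encode (\<iota> 1, \<iota> 2)) \<alpha> \<alpha> * (\<Prod>v\<in>{3..n}. Tl v (\<iota> v) \<alpha> \<alpha>) =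
          (\<Prod>v\<in>{2..n}. Tl' v (merge_index n \<iota> v) \<alpha> \<alpha>)"
      using same by (simp add: prod_merge_index[OF two_le_n, where H = "\<lambda>v x. Tl' v x \<alpha> \<alpha>"])
  qed
  finally show ?thesis .
qed

text \<open>Both inclusions reduce to this: a state of \<open>\<Gamma>\<close> is the image of a state of \<open>\<tilde>\<Gamma>\<close>
as soon as the tensor at \<open>v\<^sub>2\<close> in \<open>\<tilde>\<Gamma>\<close> is the contraction along \<open>e\<^sub>1\<close> of those at
\<open>v\<^sub>1\<close> and \<open>v\<^sub>2\<close> in \<open>\<Gamma>\<close>.\<close>

lemma merge12_tn_state:
  assumes loc: "\<forall>v\<in>{3..n}. local_ok {1..m} src tgt v (Tl v)"
    and merged: "\<And>i j \<alpha>. i \<in> P 1 \<Longrightarrow> Tl' 2 (prod_encode (i, j)) \<alpha> \<alpha> =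
        (\<Sum>x<e 1. Tl 1 i (\<alpha>(1 := x)) (\<alpha>(1 := x)) * Tl 2 j (\<alpha>(1 := x)) (\<alpha>(1 := x)))"
    and same: "\<forall>v\<in>{3..n}. Tl' v = Tl v"
  shows "merge12 n P (tn_state {2..n} {2..m} e (P(2 := prod_encode ` (P 1 \<times> P 2))) Tl') =
         tn_state {1..n} {1..m} e P Tl"
proof
  fix \<iota>
  show "merge12 n P (tn_state {2..n} {2..m} e (P(2 := prod_encode ` (P 1 \<times> P 2))) Tl') \<iota> =
        tn_state {1..n} {1..m} e P Tl \<iota>"
  proof (cases "\<iota> \<in> PiE {1..n} P")
    case True
    then have "\<iota> 1 \<in> P 1"
      using two_le_n by auto
    then have merged_\<iota>: "Tl' 2 (prod_encode (\<iota> 1, \<iota> 2)) \<alpha> \<alpha> =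
        (\<Sum>x<e 1. Tl 1 (\<iota> 1) (\<alpha>(1 := x)) (\<alpha>(1 := x)) * Tl 2 (\<iota> 2) (\<alpha>(1 := x)) (\<alpha>(1 := x)))"
      for \<alpha> by (rule merged)
    have "merge12 n P (tn_state {2..n} {2..m} e (P(2 := prod_encode ` (P 1 \<times> P 2))) Tl') \<iota> =
          tn_state {2..n} {2..m} e (P(2 := prod_encode ` (P 1 \<times> P 2))) Tl' (merge_index n \<iota>)"
      by (rule merge12_eq[OF True])
    also have "\<dots> = (\<Sum>\<alpha>\<in>PiE {2..m} (\<lambda>s. {..<e s}). \<Prod>v\<in>{2..n}. Tl' v (merge_index n \<iota> v) \<alpha> \<alpha>)"
      using merge_index_PiE[OF two_le_n True] by (simp add: tn_state_def)
    also have "\<dots> = (\<Sum>\<alpha>\<in>PiE {1..m} (\<lambda>s. {..<e s}). \<Prod>v\<in>{1..n}. Tl v (\<iota> v) \<alpha> \<alpha>)"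
      by (rule contract_leaf_edge[where Tl = Tl and Tl' = Tl' and \<iota> = \<iota> and e = e,
            OF loc merged_\<iota> same, symmetric])
    also have "\<dots> = tn_state {1..n} {1..m} e P Tl \<iota>"
      using True by (simp add: tn_state_def)
    finally show ?thesis .
  qed (simp add: merge12_def tn_state_def)
qed

lemma local_ok_leaf_merge:
  assumes loc: "\<forall>v\<in>{1..n}. local_ok {1..m} src tgt v (Tl v)"
  shows "\<forall>v\<in>{2..n}. local_ok {2..m} src tgt v ((Tl(2 := leaf_merge e Tl)) v)"
proof
  fix v assume v: "v \<in> {2..n}"
  show "local_ok {2..m} src tgt v ((Tl(2 := leaf_merge e Tl)) v)"
  proof (cases "v = 2")
    case True
    have "local_ok (insert 1 {2..m}) src tgt 1 (Tl 1)" "local_ok (insert 1 {2..m}) src tgt 2 (Tl 2)"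
      using loc two_le_n unfolding edges_eq[symmetric] by auto
    from local_ok_contract_leaf[OF this leaf_isolated,
        where X = "{..<e 1}" and h = "\<lambda>k. fst (prod_decode k)" and h' = "\<lambda>k. snd (prod_decode k)"]
    show ?thesis
      unfolding leaf_merge_def using True by simp
  next
    case False
    with v loc show ?thesis
      by (simp add: local_ok_drop_leaf_edge)
  qed
qed

lemma local_ok_leaf_split:
  assumes loc': "\<forall>v\<in>{2..n}. local_ok {2..m} src tgt v (Tl' v)"
  shows "\<forall>v\<in>{1..n}. local_ok {1..m} src tgt v (leaf_split tgt f A Tl' v)"
proof
  have ends: "1 \<in> {src 1, tgt 1}" "2 \<in> {src 1, tgt 1}" "1 \<in> {1..m}"
    using leaf_edge_ends one_le_m by auto
  have loc: "local_ok {1..m} src tgt v (Tl' v)" if "v \<in> {2..n}" for v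
    by (rule local_ok_subset[of "{2..m}"]) (use loc' that in auto)
  fix v assume v: "v \<in> {1..n}"
  consider "v = 1" | "v = 2" | "v \<in> {2..n}" "v \<noteq> 2" "v \<noteq> 1"
    using v by fastforce
  then show "local_ok {1..m} src tgt v (leaf_split tgt f A Tl' v)"
  proof cases
    case 1
    have "local_ok {1..m} src tgt 1 (\<lambda>i a b. if x = f i then 1 else 0)" for x
      by (simp add: local_ok_def)
    from local_ok_edge_leg[where H = "\<lambda>i x a b. if x = f i then 1 else 0", OF ends(3,1) this]
    show ?thesis
      using 1 by (simp add: leaf_split_def)
  next
    case 2
    have "local_ok {1..m} src tgt 2 (\<lambda>i a b. if x \<in> f ` A
            then Tl' 2 (prod_encode (the_inv_into A f x, i)) a b else 0)" for x
      using loc[of 2] two_le_n by (simp add: local_ok_def)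
    from local_ok_edge_leg[OF ends(3,2) this]
    show ?thesis
      using 2 by (simp add: leaf_split_def)
  next
    case 3
    with loc show ?thesis
      by (simp add: leaf_split_def)
  qed
qed

lemma TNS_subset_merge:
  assumes "T \<in> TNS {1..n} {1..m} src tgt e P"
  shows "T \<in> merge12 n P ` TNS {2..n} {2..m} src tgt e (P(2 := prod_encode ` (P 1 \<times> P 2)))"
proof -
  from assms obtain Tl where loc: "\<forall>v\<in>{1..n}. local_ok {1..m} src tgt v (Tl v)"
    and T: "T = tn_state {1..n} {1..m} e P Tl"
    unfolding TNS_eq_tn_state by blast
  have merged: "(Tl(2 := leaf_merge e Tl)) 2 (prod_encode (i, j)) \<alpha> \<alpha> =
      (\<Sum>x<e 1. Tl 1 i (\<alpha>(1 := x)) (\<alpha>(1 := x)) * Tl 2 j (\<alpha>(1 := x)) (\<alpha>(1 := x)))" for i j \<alpha>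
    by (simp add: leaf_merge_def)
  have same: "\<forall>v\<in>{3..n}. (Tl(2 := leaf_merge e Tl)) v = Tl v"
    by simp
  have "T = merge12 n P (tn_state {2..n} {2..m} e (P(2 := prod_encode ` (P 1 \<times> P 2))) (Tl(2 := leaf_merge e Tl)))"
    unfolding T by (rule merge12_tn_state[where Tl = Tl and Tl' = "Tl(2 := leaf_merge e Tl)" and P = P and e = e,
        OF _ merged same, symmetric]) (use loc in simp)
  moreover have "tn_state {2..n} {2..m} e (P(2 := prod_encode ` (P 1 \<times> P 2))) (Tl(2 := leaf_merge e Tl))
      \<in> TNS {2..n} {2..m} src tgt e (P(2 := prod_encode ` (P 1 \<times> P 2)))"
    unfolding TNS_eq_tn_state using local_ok_leaf_merge[OF loc] by blast
  ultimately show ?thesis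
    by blast
qed

lemma merge_subset_TNS:
  assumes "finite (P 1)" and "card (P 1) \<le> e 1"
    and "T' \<in> TNS {2..n} {2..m} src tgt e (P(2 := prod_encode ` (P 1 \<times> P 2)))"
  shows "merge12 n P T' \<in> TNS {1..n} {1..m} src tgt e P"
proof -
  from assms(3) obtain Tl' where loc': "\<forall>v\<in>{2..n}. local_ok {2..m} src tgt v (Tl' v)"
    and T': "T' = tn_state {2..n} {2..m} e (P(2 := prod_encode ` (P 1 \<times> P 2))) Tl'"
    unfolding TNS_eq_tn_state by blast
  obtain f where f: "f ` P 1 \<subseteq> {..<e 1}" "inj_on f (P 1)"
    using card_le_inj[of "P 1" "{..<e 1}"] assms(1,2) by auto
  have "local_ok {2..m} src tgt 2 (Tl' 2)"
    using loc' two_le_n by simp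
  then have split: "Tl' 2 (prod_encode (i, j)) \<alpha> \<alpha> =
      (\<Sum>x<e 1. leaf_split tgt f (P 1) Tl' 1 i (\<alpha>(1 := x)) (\<alpha>(1 := x)) *
                leaf_split tgt f (P 1) Tl' 2 j (\<alpha>(1 := x)) (\<alpha>(1 := x)))" if "i \<in> P 1" for i j \<alpha>
    by (rule leaf_split_contract[where E = "{2..m}" and src = src and tgt = tgt and Tl' = Tl' and f = f
          and A = "P 1" and e = e and i = i and j = j and \<alpha> = \<alpha>,
          OF f that, symmetric]) simp
  have same: "\<forall>v\<in>{3..n}. Tl' v = leaf_split tgt f (P 1) Tl' v"
    by (simp add: leaf_split_def)
  have "merge12 n P T' = tn_state {1..n} {1..m} e P (leaf_split tgt f (P 1) Tl')"
    unfolding T' by (rule merge12_tn_state[where Tl = "leaf_split tgt f (P 1) Tl'" and Tl' = Tl' and P = P and e = e,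
        OF _ split same]) (use local_ok_leaf_split[OF loc'] in simp)
  then show ?thesis
    unfolding TNS_eq_tn_state using local_ok_leaf_split[OF loc'] by blast
qed

end

theorem proposition6p1:
  fixes n m :: nat and src tgt e :: "nat \<Rightarrow> nat" and P :: "nat \<Rightarrow> nat set"
  assumes "n \<ge> 2" and "m \<ge> 1"
    and "\<forall>s\<in>{1..m}. src s \<in> {1..n} \<and> tgt s \<in> {1..n}"
    and "\<forall>j\<in>{1..n}. finite (P j)"
    and "{src 1, tgt 1} = {1, 2}"
    and "\<forall>s\<in>{2..m}. src s \<noteq> 1 \<and> tgt s \<noteq> 1"
    and "card (P 1) \<le> e 1"
  shows "TNS {1..n} {1..m} src tgt e P =
         merge12 n P ` TNS {2..n} {2..m} src tgt e (P(2 := prod_encode ` (P 1 \<times> P 2)))"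
proof -
  interpret leaf_edge n m src tgt
    using assms by unfold_locales
  have "finite (P 1)"
    using assms(1,4) by simp
  with assms(7) show ?thesis
    using TNS_subset_merge merge_subset_TNS by blast
qed

end
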